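(* Let $(F_n)_{n\ge0}$ be the Fibonacci sequence ($F_0=0$, $F_1=1$, $F_{n+2}=F_{n+1}+F_n$) and $\Phi=(1+\sqrt5)/2$. Let $c,d$ be fixed positive integers. Then for all positive integers $n,m$ with $n\geq 2$ and $m\leq\lfloor (n+1)/2\rfloor+1$, \[\mathrm{lcm}\left(cF_m+dF_{m-1},\,cF_{m+1}+dF_m,\,\dots,\,cF_n+dF_{n-1}\right)\geq \gcd(c,d)\left(\frac{c\Phi+d}{\Phi\gcd(c,d)}\right)^{\frac{n-1}{2}}\Phi^{\frac{n^2}{4}-\frac{n}{2}-\frac{7}{4}}.\] *)

theory Defs
  imports "HOL-Analysis.Analysis" "HOL-Number_Theory.Fib"
begin

definition golden_ratio :: real where
  "golden_ratio = (1 + sqrt 5) / 2"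

end

theory Submission
  imports Defs "HOL-Computational_Algebra.Primes"
begin

(*
  Write G k = c F k + d F (k - 1). Dividing out gcd c d reduces the claim to coprime c and d,
  and then consecutive values of G are coprime. The addition formula
  G (i + t + 1) = G (i + 1) F (t + 1) + G i F t therefore shows that every common divisor q of
  G i and G j (i < j) divides F (j - i), so q divides at most 1 + #{s <= n - M. q dvd F s} of the
  terms G M, ..., G n. Counting prime powers turns this into
    G M * ... * G n  dvd  lcm (G M, ..., G n) * F 1 * ... * F (n - M).
  With G (k + 2) >= ((c Phi + d) / Phi) Phi^k and F (s + 1) <= Phi^s this bounds the lcm from
  below for M = (n + 1) div 2 + 1, and the bound passes to every m <= M because the lcm only grows.
*)

lemma multiplicity_eq_card_powers_dvd:
  fixes p x y :: "'a :: factorial_semiring"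
  assumes "\<not> is_unit p" and "x dvd y" and "y \<noteq> 0"
  shows "multiplicity p x = card {a \<in> {1..multiplicity p y}. p ^ a dvd x}"
proof -
  have "x \<noteq> 0" using assms(2,3) by auto
  then have "{a \<in> {1..multiplicity p y}. p ^ a dvd x} = {1..multiplicity p x}"
    using assms dvd_imp_multiplicity_le[OF assms(2,3), of p]
    by (auto simp: power_dvd_iff_le_multiplicity)
  then show ?thesis by simp
qed

lemma sum_card_filter_swap:
  assumes "finite A" and "finite B"
  shows "(\<Sum>b\<in>B. card {a \<in> A. R a b}) = (\<Sum>a\<in>A. card {b \<in> B. R a b})"
proof -
  have "(\<Sum>b\<in>B. card {a \<in> A. R a b}) = (\<Sum>b\<in>B. \<Sum>a\<in>A. of_bool (R a b))"
    using assms by (simp add: Int_def conj_commute)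
  also have "\<dots> = (\<Sum>a\<in>A. \<Sum>b\<in>B. of_bool (R a b))"
    by (rule sum.swap)
  also have "\<dots> = (\<Sum>a\<in>A. card {b \<in> B. R a b})"
    using assms by (simp add: Int_def conj_commute)
  finally show ?thesis .
qed

lemma multiplicity_prod_eq_sum_card_powers_dvd:
  fixes f :: "'a \<Rightarrow> nat"
  assumes "prime p" and "finite K" and "0 \<notin> f ` K"
    and "(\<Prod>k\<in>K. f k) dvd y" and "y \<noteq> 0"
  shows "multiplicity p (\<Prod>k\<in>K. f k)
    = (\<Sum>a\<in>{1..multiplicity p y}. card {k \<in> K. p ^ a dvd f k})"
proof -
  have "\<not> is_unit p" by (rule prime_elem_not_unit[OF prime_imp_prime_elem[OF assms(1)]])
  have "f k dvd y" if "k \<in> K" for k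
    using that assms(2,4) dvd_prodI[of K k f] by (blast intro: dvd_trans)
  then have "multiplicity p (f k) = card {a \<in> {1..multiplicity p y}. p ^ a dvd f k}"
    if "k \<in> K" for k
    using that \<open>\<not> is_unit p\<close> assms(5) by (intro multiplicity_eq_card_powers_dvd) auto
  then have "multiplicity p (\<Prod>k\<in>K. f k)
      = (\<Sum>k\<in>K. card {a \<in> {1..multiplicity p y}. p ^ a dvd f k})"
    using assms(1-3) by (simp add: prime_elem_multiplicity_prod_distrib)
  also have "\<dots> = (\<Sum>a\<in>{1..multiplicity p y}. card {k \<in> K. p ^ a dvd f k})"
    using assms(2) by (simp add: sum_card_filter_swap)
  finally show ?thesis .
qed

lemma prod_dvd_Lcm_mult_prod:
  fixes f :: "'a \<Rightarrow> nat" and g :: "'b \<Rightarrow> nat"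
  assumes "finite K" and "finite S" and "0 \<notin> f ` K" and "0 \<notin> g ` S"
    and count: "\<And>q. q > 1 \<Longrightarrow> card {k \<in> K. q dvd f k} \<le> card {s \<in> S. q dvd g s} + 1"
  shows "(\<Prod>k\<in>K. f k) dvd Lcm (f ` K) * (\<Prod>s\<in>S. g s)"
proof (rule multiplicity_le_imp_dvd)
  define Q where "Q = (\<Prod>k\<in>K. f k)"
  define L where "L = Lcm (f ` K)"
  define P where "P = (\<Prod>s\<in>S. g s)"
  have "Q \<noteq> 0" "P \<noteq> 0" "L \<noteq> 0"
    using assms(1-4) by (auto simp: Q_def P_def L_def Lcm_0_iff)
  then show "(\<Prod>k\<in>K. f k) \<noteq> 0" by (simp add: Q_def)
  fix p :: nat assume p: "prime p"
  then have "\<not> is_unit p" by (rule prime_elem_not_unit[OF prime_imp_prime_elem])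
  define A where "A = {1..multiplicity p (Q * P)}"
  have count_a: "card {k \<in> K. p ^ a dvd f k}
      \<le> of_bool (a \<le> multiplicity p L) + card {s \<in> S. p ^ a dvd g s}"
    if "a \<in> A" for a
  proof (cases "a \<le> multiplicity p L")
    case True
    have "a > 0" using that by (simp add: A_def)
    then have "p ^ a > 1" by (rule one_less_power[OF prime_gt_1_nat[OF p]])
    then show ?thesis using count True by simp
  next
    case False
    have "\<not> p ^ a dvd f k" if "k \<in> K" for k
    proof
      assume "p ^ a dvd f k"
      also have "f k dvd L" using that by (simp add: L_def)
      finally show False
        using False power_dvd_iff_le_multiplicity[OF \<open>L \<noteq> 0\<close> \<open>\<not> is_unit p\<close>] by simp
    qed
    then have "{k \<in> K. p ^ a dvd f k} = {}" by blast
    with False show ?thesis by (simp only: card.empty)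
  qed
  have "{a \<in> A. a \<le> multiplicity p L} \<subseteq> {1..multiplicity p L}" by (auto simp: A_def)
  then have card_le: "card {a \<in> A. a \<le> multiplicity p L} \<le> multiplicity p L"
    using card_mono[of "{1..multiplicity p L}"] by fastforce
  have "multiplicity p Q = (\<Sum>a\<in>A. card {k \<in> K. p ^ a dvd f k})"
    unfolding A_def Q_def using p assms(1,3) \<open>Q \<noteq> 0\<close> \<open>P \<noteq> 0\<close>
    by (intro multiplicity_prod_eq_sum_card_powers_dvd) (auto simp: Q_def)
  also have "\<dots> \<le> (\<Sum>a\<in>A. of_bool (a \<le> multiplicity p L) + card {s \<in> S. p ^ a dvd g s})"
    by (rule sum_mono) (rule count_a)
  also have "\<dots>
      = card {a \<in> A. a \<le> multiplicity p L} + (\<Sum>a\<in>A. card {s \<in> S. p ^ a dvd g s})"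
    by (simp add: sum.distrib A_def Int_def)
  also have "(\<Sum>a\<in>A. card {s \<in> S. p ^ a dvd g s}) = multiplicity p P"
    unfolding A_def P_def using p assms(2,4) \<open>Q \<noteq> 0\<close> \<open>P \<noteq> 0\<close>
    by (intro multiplicity_prod_eq_sum_card_powers_dvd[symmetric]) (auto simp: P_def)
  also have "card {a \<in> A. a \<le> multiplicity p L} + multiplicity p P \<le> multiplicity p (L * P)"
    using p \<open>L \<noteq> 0\<close> \<open>P \<noteq> 0\<close> card_le
    by (simp add: prime_elem_multiplicity_mult_distrib)
  finally show "multiplicity p Q \<le> multiplicity p (L * P)" .
qed

lemma Lcm_subset_le_nat:
  fixes A B :: "nat set"
  assumes "A \<subseteq> B" and "finite B" and "0 \<notin> B"
  shows "Lcm A \<le> Lcm B"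
proof -
  have "Lcm B \<noteq> 0" using assms(2,3) by (simp add: Lcm_0_iff)
  then show ?thesis using assms(1) by (intro dvd_imp_le Lcm_subset) auto
qed

definition fib_comb :: "nat \<Rightarrow> nat \<Rightarrow> nat \<Rightarrow> nat" where
  "fib_comb c d k = c * fib k + d * fib (k - 1)"

lemma fib_comb_recurrence:
  "k \<ge> 1 \<Longrightarrow> fib_comb c d (k + 2) = fib_comb c d (k + 1) + fib_comb c d k"
  by (cases k) (simp_all add: fib_comb_def algebra_simps)

lemma zero_notin_fib_comb_image:
  assumes "c > 0" and "m \<ge> 1"
  shows "0 \<notin> fib_comb c d ` {m..n}"
proof -
  have "fib_comb c d k > 0" if "k \<in> {m..n}" for k
    using fib_neq_0_nat[of k] that assms by (simp add: fib_comb_def)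
  then show ?thesis by (metis imageE less_irrefl)
qed

lemma fib_comb_add:
  assumes "i \<ge> 1"
  shows "fib_comb c d (i + t + 1) = fib_comb c d (i + 1) * fib (t + 1) + fib_comb c d i * fib t"
proof -
  have "fib (i + t + 1) = fib (i + 1) * fib (t + 1) + fib i * fib t"
    using fib_add[of t i] by (simp add: algebra_simps)
  moreover have "fib (i + t) = fib i * fib (t + 1) + fib (i - 1) * fib t"
    using fib_add[of t "i - 1"] assms by (simp add: algebra_simps)
  ultimately show ?thesis by (simp add: fib_comb_def algebra_simps)
qed

lemma coprime_fib_comb_Suc:
  assumes "coprime c d" and "k \<ge> 1"
  shows "coprime (fib_comb c d k) (fib_comb c d (Suc k))"
  using assms(2)
proof (induction k rule: nat_induct_at_least)
  case base
  then show ?case using assms(1) by (simp add: fib_comb_def numeral_2_eq_2 coprime_iff_gcd_eq_1)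
next
  case (Suc k)
  then have "fib_comb c d (Suc (Suc k)) = fib_comb c d (Suc k) + fib_comb c d k"
    using fib_comb_recurrence[of k c d] by simp
  with Suc.IH show ?case by (simp add: coprime_iff_gcd_eq_1 gcd.commute)
qed

lemma dvd_fib_comb_imp_dvd_fib_diff:
  assumes "coprime c d" and "1 \<le> i" and "i < j"
    and "q dvd fib_comb c d i" and "q dvd fib_comb c d j"
  shows "q dvd fib (j - i)"
proof -
  obtain t where j: "j = i + t + 1"
    using assms(3) by (metis less_iff_Suc_add add_Suc_right add.commute Suc_eq_plus1)
  have "q dvd fib_comb c d (i + 1) * fib (t + 1)"
    using assms(4,5) fib_comb_add[OF assms(2), of c d t] unfolding j
    by (metis dvd_add_left_iff dvd_mult2)
  moreover have "coprime q (fib_comb c d (i + 1))"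
    using coprime_fib_comb_Suc[OF assms(1,2)] assms(4)
    by (auto intro: coprime_imp_coprime dvd_trans)
  ultimately show ?thesis by (simp add: j coprime_dvd_mult_right_iff)
qed

lemma card_dvd_fib_comb_le:
  assumes "coprime c d" and "m \<ge> 1"
  shows "card {k \<in> {m..n}. q dvd fib_comb c d k} \<le> card {s \<in> {1..n - m}. q dvd fib s} + 1"
proof (cases "{k \<in> {m..n}. q dvd fib_comb c d k} = {}")
  case False
  define D where "D = {k \<in> {m..n}. q dvd fib_comb c d k}"
  define k0 where "k0 = Min D"
  have "finite D" and "D \<noteq> {}" using False by (simp_all add: D_def)
  then have "k0 \<in> D" and k0_le: "\<And>k. k \<in> D \<Longrightarrow> k0 \<le> k"
    by (simp_all add: k0_def)
  have "D \<subseteq> insert k0 ((+) k0 ` {s \<in> {1..n - m}. q dvd fib s})"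
  proof
    fix k assume "k \<in> D"
    show "k \<in> insert k0 ((+) k0 ` {s \<in> {1..n - m}. q dvd fib s})"
    proof (cases "k = k0")
      case False
      with k0_le \<open>k \<in> D\<close> have "k0 < k" by fastforce
      then have "q dvd fib (k - k0)"
        using \<open>k0 \<in> D\<close> \<open>k \<in> D\<close> assms
        by (intro dvd_fib_comb_imp_dvd_fib_diff) (auto simp: D_def)
      moreover have "k - k0 \<in> {1..n - m}"
        using \<open>k0 < k\<close> \<open>k0 \<in> D\<close> \<open>k \<in> D\<close> by (auto simp: D_def)
      ultimately show ?thesis
        using \<open>k0 < k\<close> by (auto simp: image_iff intro!: bexI[of _ "k - k0"])
    qed simp
  qed
  then have "card D \<le> card (insert k0 ((+) k0 ` {s \<in> {1..n - m}. q dvd fib s}))"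
    by (rule card_mono[rotated]) simp
  also have "\<dots> \<le> card ((+) k0 ` {s \<in> {1..n - m}. q dvd fib s}) + 1"
    by (simp add: card_insert_if)
  also have "\<dots> \<le> card {s \<in> {1..n - m}. q dvd fib s} + 1"
    by (simp add: card_image_le)
  finally show ?thesis by (simp add: D_def)
qed (simp only: card.empty)

lemma prod_fib_comb_dvd_Lcm_mult_prod_fib:
  assumes "coprime c d" and "c > 0" and "m \<ge> 1"
  shows "(\<Prod>k\<in>{m..n}. fib_comb c d k)
    dvd Lcm (fib_comb c d ` {m..n}) * (\<Prod>s\<in>{1..n - m}. fib s)"
proof (rule prod_dvd_Lcm_mult_prod)
  show "0 \<notin> fib_comb c d ` {m..n}"
    using assms(2,3) by (rule zero_notin_fib_comb_image)
  have "fib s \<noteq> 0" if "s \<in> {1..n - m}" for s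
    using fib_neq_0_nat[of s] that by simp
  then show "0 \<notin> fib ` {1..n - m}" by force
qed (use card_dvd_fib_comb_le[OF assms(1,3)] in simp_all)

lemma golden_ratio_gt_1: "golden_ratio > 1"
  unfolding golden_ratio_def using real_sqrt_gt_1_iff[of 5] by simp

lemma golden_ratio_le_2: "golden_ratio \<le> 2"
proof -
  have "sqrt 5 \<le> 3" by (rule real_le_lsqrt) auto
  then show ?thesis unfolding golden_ratio_def by simp
qed

lemma golden_ratio_power_recurrence:
  "golden_ratio ^ (n + 2) = golden_ratio ^ (n + 1) + golden_ratio ^ n"
proof -
  have "golden_ratio ^ (n + 2) = golden_ratio ^ n * golden_ratio ^ 2"
    by (rule power_add)
  also have "golden_ratio ^ 2 = golden_ratio + 1"
    unfolding golden_ratio_def by (simp add: power2_eq_square field_simps)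
  finally show ?thesis by (simp add: algebra_simps)
qed

lemma fibonacci_like_ge_golden_ratio_power:
  fixes u :: "nat \<Rightarrow> real"
  assumes "\<And>n. u (n + 2) = u (n + 1) + u n" and "C \<le> u 0" and "C * golden_ratio \<le> u 1"
  shows "C * golden_ratio ^ n \<le> u n"
proof (induction n rule: fib.induct)
  case (3 n)
  have "C * golden_ratio ^ Suc (Suc n) = C * golden_ratio ^ Suc n + C * golden_ratio ^ n"
    using golden_ratio_power_recurrence[of n] by (simp add: algebra_simps)
  also have "\<dots> \<le> u (Suc n) + u n" using "3.IH" by simp
  also have "\<dots> = u (Suc (Suc n))" using assms(1)[of n] by simp
  finally show ?case .
qed (use assms in simp_all)

lemma fibonacci_like_le_golden_ratio_power:
  fixes u :: "nat \<Rightarrow> real"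
  assumes "\<And>n. u (n + 2) = u (n + 1) + u n" and "u 0 \<le> C" and "u 1 \<le> C * golden_ratio"
  shows "u n \<le> C * golden_ratio ^ n"
proof (induction n rule: fib.induct)
  case (3 n)
  have "u (Suc (Suc n)) = u (Suc n) + u n" using assms(1)[of n] by simp
  also have "\<dots> \<le> C * golden_ratio ^ Suc n + C * golden_ratio ^ n" using "3.IH" by simp
  also have "\<dots> = C * golden_ratio ^ Suc (Suc n)"
    using golden_ratio_power_recurrence[of n] by (simp add: algebra_simps)
  finally show ?case .
qed (use assms in simp_all)

lemma fib_le_golden_ratio_power: "real (fib (n + 1)) \<le> golden_ratio ^ n"
  using fibonacci_like_le_golden_ratio_power[of "\<lambda>n. real (fib (n + 1))" 1 n]
    golden_ratio_gt_1 by (simp add: numeral_2_eq_2)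

lemma fib_comb_ge_golden_ratio_power:
  "(c * golden_ratio + d) / golden_ratio * golden_ratio ^ n \<le> real (fib_comb c d (n + 2))"
proof (rule fibonacci_like_ge_golden_ratio_power[where u = "\<lambda>n. real (fib_comb c d (n + 2))"])
  have "golden_ratio > 0" using golden_ratio_gt_1 by simp
  show "real (fib_comb c d (n + 2 + 2))
      = real (fib_comb c d (n + 1 + 2)) + real (fib_comb c d (n + 2))"
    for n using fib_comb_recurrence[of "n + 2" c d] by (simp add: algebra_simps)
  show "(c * golden_ratio + d) / golden_ratio \<le> real (fib_comb c d (0 + 2))"
    using golden_ratio_gt_1 mult_right_mono[of 1 golden_ratio "real d"]
    by (simp add: fib_comb_def numeral_2_eq_2 field_simps)
  show "(c * golden_ratio + d) / golden_ratio * golden_ratio \<le> real (fib_comb c d (1 + 2))"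
    using mult_left_mono[OF golden_ratio_le_2, of "real c"] \<open>golden_ratio > 0\<close>
    by (simp add: fib_comb_def numeral_3_eq_3 mult.commute)
qed

lemma prod_fib_le_golden_ratio_power:
  "real (\<Prod>s\<in>{1..N}. fib s) \<le> golden_ratio ^ (\<Sum>i<N. i)"
proof -
  have "real (\<Prod>s\<in>{1..N}. fib s) = (\<Prod>i<N. real (fib (i + 1)))"
    by (simp add: prod.atLeast1_atMost_eq)
  also have "\<dots> \<le> (\<Prod>i<N. golden_ratio ^ i)"
    by (rule prod_mono) (use fib_le_golden_ratio_power in simp)
  also have "\<dots> = golden_ratio ^ (\<Sum>i<N. i)" by (simp add: power_sum)
  finally show ?thesis .
qed

lemma prod_fib_comb_ge_golden_ratio_power:
  assumes "M \<ge> 2"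
  shows "((c * golden_ratio + d) / golden_ratio) ^ (N + 1)
      * golden_ratio ^ ((N + 1) * (M - 2) + N + (\<Sum>i<N. i))
    \<le> real (\<Prod>k\<in>{M..M + N}. fib_comb c d k)"
proof -
  define C where "C = (c * golden_ratio + d) / golden_ratio"
  have "golden_ratio > 0" using golden_ratio_gt_1 by simp
  have exponent: "(\<Sum>i\<in>{0..N}. M - 2 + i) = (N + 1) * (M - 2) + N + (\<Sum>i<N. i)"
    by (simp add: sum.distrib atLeast0AtMost lessThan_Suc_atMost[symmetric])
  have "C ^ (N + 1) * golden_ratio ^ ((N + 1) * (M - 2) + N + (\<Sum>i<N. i))
      = (\<Prod>i\<in>{0..N}. C * golden_ratio ^ (M - 2 + i))"
    unfolding exponent[symmetric] by (simp add: prod.distrib power_sum)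
  also have "\<dots> \<le> (\<Prod>i\<in>{0..N}. real (fib_comb c d (i + M)))"
  proof (rule prod_mono)
    fix i
    have "C * golden_ratio ^ (M - 2 + i) \<le> real (fib_comb c d (M - 2 + i + 2))"
      unfolding C_def by (rule fib_comb_ge_golden_ratio_power)
    also have "M - 2 + i + 2 = i + M" using assms by simp
    finally show "0 \<le> C * golden_ratio ^ (M - 2 + i)
        \<and> C * golden_ratio ^ (M - 2 + i) \<le> real (fib_comb c d (i + M))"
      using \<open>golden_ratio > 0\<close> by (simp add: C_def)
  qed
  also have "\<dots> = real (\<Prod>k\<in>{M..M + N}. fib_comb c d k)"
    using prod.shift_bounds_cl_nat_ivl[of "fib_comb c d" 0 M N] by (simp add: add.commute)
  finally show ?thesis by (simp only: C_def)
qed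

lemma Lcm_fib_comb_ge:
  assumes "coprime c d" and "c > 0" and "M \<ge> 2"
  shows "((c * golden_ratio + d) / golden_ratio) ^ (N + 1) * golden_ratio ^ ((N + 1) * (M - 2) + N)
    \<le> real (Lcm (fib_comb c d ` {M..M + N}))"
proof -
  let ?C = "(c * golden_ratio + d) / golden_ratio"
  let ?E = "(N + 1) * (M - 2) + N"
  let ?S = "\<Sum>i<N. i"
  define L where "L = Lcm (fib_comb c d ` {M..M + N})"
  define P where "P = (\<Prod>s\<in>{1..N}. fib s)"
  have "P \<noteq> 0" using fib_neq_0_nat by (simp add: P_def)
  have "L \<noteq> 0"
    using zero_notin_fib_comb_image[OF assms(2), of M] assms(3) by (simp add: L_def Lcm_0_iff)
  have "(\<Prod>k\<in>{M..M + N}. fib_comb c d k) dvd L * P"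
    using prod_fib_comb_dvd_Lcm_mult_prod_fib[OF assms(1,2), of M "M + N"] assms(3)
    by (simp add: L_def P_def)
  then have Q_le: "(\<Prod>k\<in>{M..M + N}. fib_comb c d k) \<le> L * P"
    using \<open>L \<noteq> 0\<close> \<open>P \<noteq> 0\<close> by (simp add: dvd_imp_le)
  have "?C ^ (N + 1) * golden_ratio ^ ?E * golden_ratio ^ ?S
      = ?C ^ (N + 1) * golden_ratio ^ (?E + ?S)"
    by (simp only: power_add mult.assoc)
  also have "\<dots> \<le> real (\<Prod>k\<in>{M..M + N}. fib_comb c d k)"
    by (rule prod_fib_comb_ge_golden_ratio_power[OF assms(3)])
  also have "\<dots> \<le> real L * real P"
    unfolding of_nat_mult[symmetric] of_nat_le_iff by (rule Q_le)
  also have "\<dots> \<le> real L * golden_ratio ^ ?S"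
    using prod_fib_le_golden_ratio_power[of N] by (simp add: P_def mult_left_mono)
  finally show ?thesis unfolding L_def
    by (rule mult_right_le_imp_le) (use golden_ratio_gt_1 in simp)
qed

lemma half_split_exponent_bounds:
  fixes n :: nat
  assumes "n \<ge> 2"
  defines "M \<equiv> (n + 1) div 2 + 1"
  shows "2 \<le> M" and "M \<le> n" and "(real n - 1) / 2 \<le> real (n - M + 1)"
    and "real n ^ 2 / 4 - real n / 2 - 7 / 4 \<le> real ((n - M + 1) * (M - 2) + (n - M))"
proof -
  define i where "i = (n - 2) div 2"
  have "n = 2 * i + 2 \<and> M = i + 2 \<or> n = 2 * i + 3 \<and> M = i + 3"
    unfolding M_def i_def using assms(1) by presburger
  then consider "n = 2 * i + 2" "M = i + 2" | "n = 2 * i + 3" "M = i + 3"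
    by blast
  then show "2 \<le> M" and "M \<le> n" and "(real n - 1) / 2 \<le> real (n - M + 1)"
    and "real n ^ 2 / 4 - real n / 2 - 7 / 4 \<le> real ((n - M + 1) * (M - 2) + (n - M))"
    by (cases; simp add: power2_eq_square algebra_simps)+
qed

lemma Lcm_fib_comb_ge_powr:
  assumes "coprime c d" and "c > 0" and "n \<ge> 2" and "m \<ge> 1" and "m \<le> (n + 1) div 2 + 1"
  shows "((c * golden_ratio + d) / golden_ratio) powr ((real n - 1) / 2)
      * golden_ratio powr (real n ^ 2 / 4 - real n / 2 - 7 / 4)
    \<le> real (Lcm (fib_comb c d ` {m..n}))"
proof -
  define C where "C = (c * golden_ratio + d) / golden_ratio"
  define M where "M = (n + 1) div 2 + 1"
  define N where "N = n - M"
  note bounds = half_split_exponent_bounds[OF assms(3), folded M_def, folded N_def]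
  have "golden_ratio \<le> c * golden_ratio" using golden_ratio_gt_1 assms(2) by simp
  then have "C \<ge> 1"
    unfolding C_def using golden_ratio_gt_1 by (subst le_divide_eq_1_pos) linarith+
  have "C powr ((real n - 1) / 2) \<le> C powr real (N + 1)"
    using bounds(3) \<open>C \<ge> 1\<close> by (rule powr_mono)
  also have "\<dots> = C ^ (N + 1)"
    using \<open>C \<ge> 1\<close> by (intro powr_realpow) simp
  finally have "C powr ((real n - 1) / 2) \<le> C ^ (N + 1)" .
  moreover have "golden_ratio powr (real n ^ 2 / 4 - real n / 2 - 7 / 4)
      \<le> golden_ratio powr real ((N + 1) * (M - 2) + N)"
    using bounds(4) golden_ratio_gt_1 by (intro powr_mono) simp_all
  then have "golden_ratio powr (real n ^ 2 / 4 - real n / 2 - 7 / 4)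
      \<le> golden_ratio ^ ((N + 1) * (M - 2) + N)"
    using golden_ratio_gt_1 by (subst (asm) powr_realpow) simp_all
  ultimately have "C powr ((real n - 1) / 2) * golden_ratio powr (real n ^ 2 / 4 - real n / 2 - 7 / 4)
      \<le> C ^ (N + 1) * golden_ratio ^ ((N + 1) * (M - 2) + N)"
    using \<open>C \<ge> 1\<close> by (intro mult_mono) simp_all
  also have "\<dots> \<le> real (Lcm (fib_comb c d ` {M..M + N}))"
    unfolding C_def using assms(1,2) bounds(1) by (rule Lcm_fib_comb_ge)
  also have "\<dots> \<le> real (Lcm (fib_comb c d ` {m..n}))"
    using assms(2,4,5) bounds(2) zero_notin_fib_comb_image[OF assms(2,4)]
    by (simp add: N_def M_def Lcm_subset_le_nat image_mono)
  finally show ?thesis by (simp add: C_def)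
qed

theorem corollary1:
  fixes c d n m :: nat
  assumes "c > 0" and "d > 0" and "n \<ge> 2" and "m > 0"
    and "m \<le> (n + 1) div 2 + 1"
  shows "real (Lcm {c * fib k + d * fib (k - 1) | k. m \<le> k \<and> k \<le> n})
    \<ge> real (gcd c d)
       * ((c * golden_ratio + d) / (golden_ratio * gcd c d)) powr ((real n - 1) / 2)
       * golden_ratio powr ((real n)^2 / 4 - real n / 2 - 7 / 4)"
proof -
  define g where "g = gcd c d"
  have "g > 0" using assms(1) by (simp add: g_def)
  obtain c' d' where cd: "c = c' * g" "d = d' * g" and "coprime c' d'"
    using gcd_coprime_exists[of c d] \<open>g > 0\<close> unfolding g_def by auto
  have "c' > 0" using assms(1) cd by simp
  have "m \<le> n" using half_split_exponent_bounds(2)[OF assms(3)] assms(5) by simp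
  have "{c * fib k + d * fib (k - 1) | k. m \<le> k \<and> k \<le> n}
      = (\<lambda>k. g * fib_comb c' d' k) ` {m..n}"
    by (auto simp: cd fib_comb_def algebra_simps)
  also have "\<dots> = (*) g ` fib_comb c' d' ` {m..n}"
    by (simp add: image_image)
  finally have Lcm_eq: "Lcm {c * fib k + d * fib (k - 1) | k. m \<le> k \<and> k \<le> n}
      = g * Lcm (fib_comb c' d' ` {m..n})"
    using \<open>m \<le> n\<close> by (simp add: Lcm_mult)
  have "(c * golden_ratio + d) / (golden_ratio * g) = (c' * golden_ratio + d') / golden_ratio"
    using \<open>g > 0\<close> golden_ratio_gt_1 by (simp add: cd field_simps)
  then show ?thesis
    unfolding Lcm_eq g_def[symmetric]
    using Lcm_fib_comb_ge_powr[OF \<open>coprime c' d'\<close> \<open>c' > 0\<close> assms(3) _ assms(5)] assms(4)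
    by (simp add: mult.assoc mult_left_mono)
qed

end
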